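(* Let $W^\pm=(\alpha_1^\pm,\rho_1^\pm,\rho_2^\pm,u_1^\pm,u_2^\pm)$ with $\alpha_1^\pm\in(0,1)$, $\rho_i^\pm>0$, and $S\in\mathbb{R}$ satisfy the Rankine–Hugoniot conditions \begin{align*} &[\![\alpha_1\rho u]\!]=S[\![\alpha_1\rho]\!],\quad [\![\alpha_1\rho_1u_1]\!]=S[\![\alpha_1\rho_1]\!],\quad [\![\rho u]\!]=S[\![\rho]\!],\\ &[\![\alpha_1\rho_1u_1^2+\alpha_2\rho_2u_2^2+\alpha_1p_1+\alpha_2p_2]\!]=S[\![\alpha_1\rho_1u_1+\alpha_2\rho_2u_2]\!],\quad [\![\tfrac12(u_1^2-u_2^2)+\Psi_1-\Psi_2]\!]=S[\![u_1-u_2]\!]. \end{align*} Define the energy dissipation across the discontinuity \[ D=\sum_{i=1}^2\Big(-S\,[\![\alpha_i\rho_i(\varphi_i+\tfrac12u_i^2)]\!]+[\![\alpha_i\rho_iu_i(\Psi_i+\tfrac12u_i^2)]\!]\Big). \] Then the quantities $\alpha_iQ_i$ ($i=1,2$) and $Q$ take the same value on both sides, $[\![\Psi_1+\tfrac12(u_1-S)^2]\!]=[\![\Psi_2+\tfrac12(u_2-S)^2]\!]$, and \[ D=-\sum_{i=1}^2\alpha_iQ_i\,[\![\Psi_i+\tfrac12(u_i-S)^2]\!]=-Q\,[\![\Psi_1+\tfrac12(u_1-S)^2]\!]=-Q\,[\![\Psi_2+\tfrac12(u_2-S)^2]\!]. \] In particular the entropy (energy) admissibility condition $D\le0$ is equivalent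 to $Q\,[\![\Psi_1+\tfrac12(u_1-S)^2]\!]\ge0$.
   Context: For $i=1,2$, $p_i:(0,\infty)\to\mathbb{R}$ is smooth with $p_i'>0$; $\varphi_i$ is an antiderivative of $\rho\mapsto p_i(\rho)/\rho^2$ (the specific internal energy in the isentropic case, the specific free energy $e_i-Ts_i$ in the isothermal case) and $\Psi_i(\rho)=\varphi_i(\rho)+p_i(\rho)/\rho$ (enthalpy, resp. Gibbs energy). For a state: $\alpha_2=1-\alpha_1$, $\rho=\alpha_1\rho_1+\alpha_2\rho_2$, $c_i=\alpha_i\rho_i/\rho$, $u=c_1u_1+c_2u_2$, $p_i=p_i(\rho_i)$, $\varphi_i=\varphi_i(\rho_i)$, $\Psi_i=\Psi_i(\rho_i)$. Mass fluxes: $Q=-\rho(u-S)$, $Q_i=-\rho_i(u_i-S)$. $[\![f]\!]=f(W^+)-f(W^-)$. The admissibility (mathematical entropy) condition for the system is that the total energy $\sum_i\alpha_i\rho_i(\varphi_i+u_i^2/2)$ with flux $\sum_i\alpha_i\rho_iu_i(\Psi_i+u_i^2/2)$ is dissipated, i.e. $D\le 0$ across discontinuities. *)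

theory Defs
  imports "HOL-Analysis.Analysis"
begin

type_synonym state = "real \<times> real \<times> real \<times> real \<times> real"

definition al1 :: "state \<Rightarrow> real" where "al1 W = (case W of (a,r1,r2,v1,v2) \<Rightarrow> a)"
definition al2 :: "state \<Rightarrow> real" where "al2 W = 1 - al1 W"
definition rh1 :: "state \<Rightarrow> real" where "rh1 W = (case W of (a,r1,r2,v1,v2) \<Rightarrow> r1)"
definition rh2 :: "state \<Rightarrow> real" where "rh2 W = (case W of (a,r1,r2,v1,v2) \<Rightarrow> r2)"
definition vel1 :: "state \<Rightarrow> real" where "vel1 W = (case W of (a,r1,r2,v1,v2) \<Rightarrow> v1)"
definition vel2 :: "state \<Rightarrow> real" where "vel2 W = (case W of (a,r1,r2,v1,v2) \<Rightarrow> v2)"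

definition rho_mix :: "state \<Rightarrow> real" where
  "rho_mix W = al1 W * rh1 W + al2 W * rh2 W"
definition c1 :: "state \<Rightarrow> real" where "c1 W = al1 W * rh1 W / rho_mix W"
definition c2 :: "state \<Rightarrow> real" where "c2 W = al2 W * rh2 W / rho_mix W"
definition u_mix :: "state \<Rightarrow> real" where "u_mix W = c1 W * vel1 W + c2 W * vel2 W"

definition jump :: "(state \<Rightarrow> real) \<Rightarrow> state \<Rightarrow> state \<Rightarrow> real" where
  "jump f Wm Wp = f Wp - f Wm"

definition Psi :: "(real \<Rightarrow> real) \<Rightarrow> (real \<Rightarrow> real) \<Rightarrow> real \<Rightarrow> real" where
  "Psi p \<phi> r = \<phi> r + p r / r"

definition Qm :: "real \<Rightarrow> state \<Rightarrow> real" where "Qm S W = - rho_mix W * (u_mix W - S)"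
definition Q1 :: "real \<Rightarrow> state \<Rightarrow> real" where "Q1 S W = - rh1 W * (vel1 W - S)"
definition Q2 :: "real \<Rightarrow> state \<Rightarrow> real" where "Q2 S W = - rh2 W * (vel2 W - S)"

definition pressure_law :: "(real \<Rightarrow> real) \<Rightarrow> bool" where
  "pressure_law p \<longleftrightarrow> (\<forall>k. ((deriv ^^ k) p) differentiable_on {0<..})
      \<and> (\<forall>r>0. deriv p r > 0)"

definition free_energy :: "(real \<Rightarrow> real) \<Rightarrow> (real \<Rightarrow> real) \<Rightarrow> bool" where
  "free_energy p \<phi> \<longleftrightarrow> (\<forall>r>0. (\<phi> has_real_derivative p r / r\<^sup>2) (at r))"

definition admissible_state :: "state \<Rightarrow> bool" where
  "admissible_state W \<longleftrightarrow> 0 < al1 W \<and> al1 W < 1 \<and> 0 < rh1 W \<and> 0 < rh2 W"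

definition RH :: "(real \<Rightarrow> real) \<Rightarrow> (real \<Rightarrow> real) \<Rightarrow> (real \<Rightarrow> real) \<Rightarrow> (real \<Rightarrow> real)
    \<Rightarrow> real \<Rightarrow> state \<Rightarrow> state \<Rightarrow> bool" where
  "RH p1 p2 \<phi>1 \<phi>2 S Wm Wp \<longleftrightarrow>
     jump (\<lambda>W. al1 W * rho_mix W * u_mix W) Wm Wp = S * jump (\<lambda>W. al1 W * rho_mix W) Wm Wp
   \<and> jump (\<lambda>W. al1 W * rh1 W * vel1 W) Wm Wp = S * jump (\<lambda>W. al1 W * rh1 W) Wm Wp
   \<and> jump (\<lambda>W. rho_mix W * u_mix W) Wm Wp = S * jump rho_mix Wm Wp
   \<and> jump (\<lambda>W. al1 W * rh1 W * (vel1 W)\<^sup>2 + al2 W * rh2 W * (vel2 W)\<^sup>2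
               + al1 W * p1 (rh1 W) + al2 W * p2 (rh2 W)) Wm Wp
       = S * jump (\<lambda>W. al1 W * rh1 W * vel1 W + al2 W * rh2 W * vel2 W) Wm Wp
   \<and> jump (\<lambda>W. ((vel1 W)\<^sup>2 - (vel2 W)\<^sup>2) / 2 + Psi p1 \<phi>1 (rh1 W) - Psi p2 \<phi>2 (rh2 W)) Wm Wp
       = S * jump (\<lambda>W. vel1 W - vel2 W) Wm Wp"

definition Diss :: "(real \<Rightarrow> real) \<Rightarrow> (real \<Rightarrow> real) \<Rightarrow> (real \<Rightarrow> real) \<Rightarrow> (real \<Rightarrow> real)
    \<Rightarrow> real \<Rightarrow> state \<Rightarrow> state \<Rightarrow> real" where
  "Diss p1 p2 \<phi>1 \<phi>2 S Wm Wp =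
     (- S * jump (\<lambda>W. al1 W * rh1 W * (\<phi>1 (rh1 W) + (vel1 W)\<^sup>2 / 2)) Wm Wp
      + jump (\<lambda>W. al1 W * rh1 W * vel1 W * (Psi p1 \<phi>1 (rh1 W) + (vel1 W)\<^sup>2 / 2)) Wm Wp)
   + (- S * jump (\<lambda>W. al2 W * rh2 W * (\<phi>2 (rh2 W) + (vel2 W)\<^sup>2 / 2)) Wm Wp
      + jump (\<lambda>W. al2 W * rh2 W * vel2 W * (Psi p2 \<phi>2 (rh2 W) + (vel2 W)\<^sup>2 / 2)) Wm Wp)"

end

theory Submission
  imports Defs
begin

text \<open>
  Each phase transports the mass flux \<open>j\<^sub>i = \<alpha>\<^sub>i\<rho>\<^sub>i(u\<^sub>i - S) = -\<alpha>\<^sub>iQ\<^sub>i\<close>, which the mass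
  relations make continuous across the discontinuity. Pointwise, the energy flux of phase \<open>i\<close>
  relative to the shock equals \<open>j\<^sub>i (\<Psi>\<^sub>i + (u\<^sub>i - S)\<^sup>2/2 - S\<^sup>2/2)\<close> plus \<open>S\<close> times the momentum
  flux of that phase relative to the shock; the latter terms cancel in the sum over the
  phases by the momentum relation, so \<open>D = -\<Sigma> \<alpha>\<^sub>iQ\<^sub>i [\<Psi>\<^sub>i + (u\<^sub>i - S)\<^sup>2/2]\<close>. The last
  relation says precisely that both Bernoulli jumps agree, and \<open>\<alpha>\<^sub>1Q\<^sub>1 + \<alpha>\<^sub>2Q\<^sub>2 = Q\<close>.
\<close>

lemma jump_mult_eq_iff_flux_eq:
  "jump (\<lambda>W. m W * u W) Wm Wp = S * jump m Wm Wp
    \<longleftrightarrow> m Wm * (u Wm - S) = m Wp * (u Wp - S)"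
  unfolding jump_def by (auto simp: algebra_simps)

lemma jump_Bernoulli_eq_iff:
  "jump (\<lambda>W. a W + (u1 W - S)\<^sup>2 / 2) Wm Wp = jump (\<lambda>W. b W + (u2 W - S)\<^sup>2 / 2) Wm Wp
    \<longleftrightarrow> jump (\<lambda>W. ((u1 W)\<^sup>2 - (u2 W)\<^sup>2) / 2 + a W - b W) Wm Wp = S * jump (\<lambda>W. u1 W - u2 W) Wm Wp"
  unfolding jump_def by (auto simp: power2_eq_square field_simps)

lemma rho_mix_pos: "admissible_state W \<Longrightarrow> 0 < rho_mix W"
  unfolding admissible_state_def rho_mix_def al2_def by (simp add: add_pos_pos)

lemma Qm_eq_phase_fluxes:
  assumes "admissible_state W"
  shows "Qm S W = al1 W * Q1 S W + al2 W * Q2 S W"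
proof -
  have "rho_mix W * u_mix W = al1 W * rh1 W * vel1 W + al2 W * rh2 W * vel2 W"
    using rho_mix_pos[OF assms] unfolding u_mix_def c1_def c2_def by (simp add: field_simps)
  then show ?thesis
    unfolding Qm_def Q1_def Q2_def by (simp add: rho_mix_def algebra_simps)
qed

lemma energy_flux_split:
  fixes \<alpha> \<rho> u P F S :: real
  assumes "\<rho> \<noteq> 0"
  shows "- S * (\<alpha> * \<rho> * (F + u\<^sup>2 / 2)) + \<alpha> * \<rho> * u * (F + P / \<rho> + u\<^sup>2 / 2)
    = \<alpha> * \<rho> * (u - S) * (F + P / \<rho> + (u - S)\<^sup>2 / 2 - S\<^sup>2 / 2)
      + S * (\<alpha> * \<rho> * u * (u - S) + \<alpha> * P)"
  using assms by (simp add: field_simps power2_eq_square)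

definition phase_dissipation ::
    "(real \<Rightarrow> real) \<Rightarrow> (real \<Rightarrow> real) \<Rightarrow> (state \<Rightarrow> real) \<Rightarrow> (state \<Rightarrow> real) \<Rightarrow> (state \<Rightarrow> real)
      \<Rightarrow> real \<Rightarrow> state \<Rightarrow> state \<Rightarrow> real" where
  "phase_dissipation p \<phi> \<alpha> \<rho> u S Wm Wp =
     - S * jump (\<lambda>W. \<alpha> W * \<rho> W * (\<phi> (\<rho> W) + (u W)\<^sup>2 / 2)) Wm Wp
     + jump (\<lambda>W. \<alpha> W * \<rho> W * u W * (Psi p \<phi> (\<rho> W) + (u W)\<^sup>2 / 2)) Wm Wp"

lemma Diss_eq_phase_dissipation:
  "Diss p1 p2 \<phi>1 \<phi>2 S Wm Wp
    = phase_dissipation p1 \<phi>1 al1 rh1 vel1 S Wm Wp + phase_dissipation p2 \<phi>2 al2 rh2 vel2 S Wm Wp"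
  unfolding Diss_def phase_dissipation_def ..

lemma phase_dissipation_eq:
  assumes "\<rho> Wm \<noteq> 0" and "\<rho> Wp \<noteq> 0"
    and flux: "\<alpha> Wm * \<rho> Wm * (u Wm - S) = \<alpha> Wp * \<rho> Wp * (u Wp - S)"
  shows "phase_dissipation p \<phi> \<alpha> \<rho> u S Wm Wp
    = \<alpha> Wm * \<rho> Wm * (u Wm - S) * jump (\<lambda>W. Psi p \<phi> (\<rho> W) + (u W - S)\<^sup>2 / 2) Wm Wp
      + S * jump (\<lambda>W. \<alpha> W * \<rho> W * u W * (u W - S) + \<alpha> W * p (\<rho> W)) Wm Wp"
proof -
  let ?B = "\<lambda>W. Psi p \<phi> (\<rho> W) + (u W - S)\<^sup>2 / 2"
  let ?j = "\<lambda>W. \<alpha> W * \<rho> W * (u W - S)"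
  let ?M = "\<lambda>W. \<alpha> W * \<rho> W * u W * (u W - S) + \<alpha> W * p (\<rho> W)"
  have split: "- S * (\<alpha> W * \<rho> W * (\<phi> (\<rho> W) + (u W)\<^sup>2 / 2))
      + \<alpha> W * \<rho> W * u W * (Psi p \<phi> (\<rho> W) + (u W)\<^sup>2 / 2)
      = ?j W * (?B W - S\<^sup>2 / 2) + S * ?M W" if "\<rho> W \<noteq> 0" for W
    using energy_flux_split[OF that] unfolding Psi_def .
  have "phase_dissipation p \<phi> \<alpha> \<rho> u S Wm Wp
      = (?j Wp * (?B Wp - S\<^sup>2 / 2) + S * ?M Wp) - (?j Wm * (?B Wm - S\<^sup>2 / 2) + S * ?M Wm)"
    unfolding phase_dissipation_def jump_def split[OF assms(1), symmetric] split[OF assms(2), symmetric]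
    by (simp add: algebra_simps)
  also have "\<dots> = ?j Wm * jump ?B Wm Wp + S * jump ?M Wm Wp"
    unfolding flux[symmetric] jump_def by (simp add: algebra_simps)
  finally show ?thesis .
qed

lemma RH_phase1_flux_eq:
  "RH p1 p2 \<phi>1 \<phi>2 S Wm Wp \<Longrightarrow> al1 Wm * Q1 S Wm = al1 Wp * Q1 S Wp"
  unfolding RH_def jump_mult_eq_iff_flux_eq Q1_def by (simp add: algebra_simps)

lemma RH_Qm_eq: "RH p1 p2 \<phi>1 \<phi>2 S Wm Wp \<Longrightarrow> Qm S Wm = Qm S Wp"
  unfolding RH_def jump_mult_eq_iff_flux_eq Qm_def by simp

lemma RH_phase2_flux_eq:
  assumes "admissible_state Wm" and "admissible_state Wp" and "RH p1 p2 \<phi>1 \<phi>2 S Wm Wp"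
  shows "al2 Wm * Q2 S Wm = al2 Wp * Q2 S Wp"
  using RH_phase1_flux_eq[OF assms(3)] RH_Qm_eq[OF assms(3)]
    Qm_eq_phase_fluxes[OF assms(1)] Qm_eq_phase_fluxes[OF assms(2)] by simp

lemma RH_jump_Bernoulli_eq:
  "RH p1 p2 \<phi>1 \<phi>2 S Wm Wp \<Longrightarrow>
    jump (\<lambda>W. Psi p1 \<phi>1 (rh1 W) + (vel1 W - S)\<^sup>2 / 2) Wm Wp
      = jump (\<lambda>W. Psi p2 \<phi>2 (rh2 W) + (vel2 W - S)\<^sup>2 / 2) Wm Wp"
  unfolding RH_def jump_Bernoulli_eq_iff by blast

lemma RH_relative_momentum_balance:
  "RH p1 p2 \<phi>1 \<phi>2 S Wm Wp \<Longrightarrow>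
    jump (\<lambda>W. al1 W * rh1 W * vel1 W * (vel1 W - S) + al1 W * p1 (rh1 W)) Wm Wp
      + jump (\<lambda>W. al2 W * rh2 W * vel2 W * (vel2 W - S) + al2 W * p2 (rh2 W)) Wm Wp = 0"
  unfolding RH_def jump_def by (simp add: algebra_simps power2_eq_square)

lemma Diss_eq_phase_fluxes:
  assumes "admissible_state Wm" and "admissible_state Wp" and RH: "RH p1 p2 \<phi>1 \<phi>2 S Wm Wp"
  shows "Diss p1 p2 \<phi>1 \<phi>2 S Wm Wp
    = - (al1 Wm * Q1 S Wm * jump (\<lambda>W. Psi p1 \<phi>1 (rh1 W) + (vel1 W - S)\<^sup>2 / 2) Wm Wp
         + al2 Wm * Q2 S Wm * jump (\<lambda>W. Psi p2 \<phi>2 (rh2 W) + (vel2 W - S)\<^sup>2 / 2) Wm Wp)"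
proof -
  have "rh1 Wm \<noteq> 0" "rh1 Wp \<noteq> 0" "rh2 Wm \<noteq> 0" "rh2 Wp \<noteq> 0"
    using assms(1,2) unfolding admissible_state_def by auto
  moreover have "al1 Wm * rh1 Wm * (vel1 Wm - S) = al1 Wp * rh1 Wp * (vel1 Wp - S)"
    "al2 Wm * rh2 Wm * (vel2 Wm - S) = al2 Wp * rh2 Wp * (vel2 Wp - S)"
    using RH_phase1_flux_eq[OF RH] RH_phase2_flux_eq[OF assms] unfolding Q1_def Q2_def
    by (simp_all add: algebra_simps)
  ultimately have
    "phase_dissipation p1 \<phi>1 al1 rh1 vel1 S Wm Wp
      = - al1 Wm * Q1 S Wm * jump (\<lambda>W. Psi p1 \<phi>1 (rh1 W) + (vel1 W - S)\<^sup>2 / 2) Wm Wp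
        + S * jump (\<lambda>W. al1 W * rh1 W * vel1 W * (vel1 W - S) + al1 W * p1 (rh1 W)) Wm Wp"
    "phase_dissipation p2 \<phi>2 al2 rh2 vel2 S Wm Wp
      = - al2 Wm * Q2 S Wm * jump (\<lambda>W. Psi p2 \<phi>2 (rh2 W) + (vel2 W - S)\<^sup>2 / 2) Wm Wp
        + S * jump (\<lambda>W. al2 W * rh2 W * vel2 W * (vel2 W - S) + al2 W * p2 (rh2 W)) Wm Wp"
    using phase_dissipation_eq unfolding Q1_def Q2_def by simp_all
  then show ?thesis
    using RH_relative_momentum_balance[OF RH, THEN arg_cong[where f = "(*) S"]]
    unfolding Diss_eq_phase_dissipation distrib_left by simp
qed

theorem mainTheorem3:
  fixes p1 p2 \<phi>1 \<phi>2 :: "real \<Rightarrow> real" and S :: real and Wm Wp :: state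
  assumes "pressure_law p1" and "pressure_law p2"
    and "free_energy p1 \<phi>1" and "free_energy p2 \<phi>2"
    and "admissible_state Wm" and "admissible_state Wp"
    and "RH p1 p2 \<phi>1 \<phi>2 S Wm Wp"
  shows "al1 Wm * Q1 S Wm = al1 Wp * Q1 S Wp
    \<and> al2 Wm * Q2 S Wm = al2 Wp * Q2 S Wp
    \<and> Qm S Wm = Qm S Wp
    \<and> jump (\<lambda>W. Psi p1 \<phi>1 (rh1 W) + (vel1 W - S)\<^sup>2 / 2) Wm Wp
        = jump (\<lambda>W. Psi p2 \<phi>2 (rh2 W) + (vel2 W - S)\<^sup>2 / 2) Wm Wp
    \<and> Diss p1 p2 \<phi>1 \<phi>2 S Wm Wp
        = - (al1 Wm * Q1 S Wm * jump (\<lambda>W. Psi p1 \<phi>1 (rh1 W) + (vel1 W - S)\<^sup>2 / 2) Wm Wp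
             + al2 Wm * Q2 S Wm * jump (\<lambda>W. Psi p2 \<phi>2 (rh2 W) + (vel2 W - S)\<^sup>2 / 2) Wm Wp)
    \<and> Diss p1 p2 \<phi>1 \<phi>2 S Wm Wp
        = - Qm S Wm * jump (\<lambda>W. Psi p1 \<phi>1 (rh1 W) + (vel1 W - S)\<^sup>2 / 2) Wm Wp
    \<and> Diss p1 p2 \<phi>1 \<phi>2 S Wm Wp
        = - Qm S Wm * jump (\<lambda>W. Psi p2 \<phi>2 (rh2 W) + (vel2 W - S)\<^sup>2 / 2) Wm Wp
    \<and> (Diss p1 p2 \<phi>1 \<phi>2 S Wm Wp \<le> 0
        \<longleftrightarrow> Qm S Wm * jump (\<lambda>W. Psi p1 \<phi>1 (rh1 W) + (vel1 W - S)\<^sup>2 / 2) Wm Wp \<ge> 0)"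
proof -
  let ?J1 = "jump (\<lambda>W. Psi p1 \<phi>1 (rh1 W) + (vel1 W - S)\<^sup>2 / 2) Wm Wp"
  let ?J2 = "jump (\<lambda>W. Psi p2 \<phi>2 (rh2 W) + (vel2 W - S)\<^sup>2 / 2) Wm Wp"
  have Bernoulli: "?J1 = ?J2"
    using RH_jump_Bernoulli_eq assms(7) .
  have D: "Diss p1 p2 \<phi>1 \<phi>2 S Wm Wp = - (al1 Wm * Q1 S Wm * ?J1 + al2 Wm * Q2 S Wm * ?J2)"
    using Diss_eq_phase_fluxes assms(5-7) .
  also have "\<dots> = - Qm S Wm * ?J1"
    using Bernoulli Qm_eq_phase_fluxes[OF assms(5)] by (simp add: algebra_simps)
  finally have DQ: "Diss p1 p2 \<phi>1 \<phi>2 S Wm Wp = - Qm S Wm * ?J1" .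
  show ?thesis
    using D DQ Bernoulli RH_phase1_flux_eq[OF assms(7)] RH_phase2_flux_eq[OF assms(5-7)]
      RH_Qm_eq[OF assms(7)] by auto
qed

end
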